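(* $$\sum_{n=1}^\infty \frac{H_n \binom{2n}{n}}{n(n+1)\, 2^{2n}} = \frac{\pi^2}{3} - 4\log 2.$$
   Context: $H_n=\sum_{k=1}^n \frac{1}{k}$ denotes the $n$-th harmonic number and $\binom{2n}{n}$ the central binomial coefficient; $\log$ is the natural logarithm. *)

theory Defs
  imports "HOL-Analysis.Analysis"
begin

end

theory Submission
  imports Defs "HOL-Real_Asymp.Real_Asymp"
begin

(* Write c_n = binom(2n, n) / 4^n and split 1/(n(n+1)) = 1/n - 1/(n+1).

   Since c_n - c_(n+1) = c_n / (2n+2), the terms H_n c_n / (n+1) are 2 H_n (c_n - c_(n+1)), and
   summation by parts (H_n c_n -> 0) turns their sum into 2 sum c_n / n. Integrating the binomial
   series sum c_n y^n = 1 / sqrt(1-y) gives sum c_n y^n / n = 2 ln 2 - 2 ln(1 + sqrt(1-y)), hence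
   sum c_n / n = 2 ln 2.

   For the other half, H_n / n = sum_k 1 / (k (k+n)), and induction on k with the recurrence of c_n
   gives sum_n c_n / (n+k) = 1 / (k c_k). Exchanging the order of summation of the resulting
   non-negative double series yields sum_n c_n H_n / n = sum_k (1 / (k^2 c_k) - 1 / k^2)
   = pi^2/2 - pi^2/6, where the first value comes from sum y^n / (2 n^2 c_n) = arcsin(sqrt y)^2:
   after the substitution y = sin^2 t, the second-order differential equation satisfied by this
   power series integrates twice to t^2.

   Both evaluations at y = 1 use that for non-negative coefficients the limit of the power series
   as y -> 1- is the sum of the coefficients. *)

section \<open>Double series and power series\<close>

lemma sums_swap_nonneg:
  fixes F :: "nat \<Rightarrow> nat \<Rightarrow> real"
  assumes nonneg: "\<And>k n. F k n \<ge> 0"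
    and rows: "\<And>k. (\<lambda>n. F k n) sums g k"
    and cols: "\<And>n. (\<lambda>k. F k n) sums h n"
    and "g sums s"
  shows "h sums s"
proof -
  have "g k \<ge> 0" for k
    using sums_le[OF _ sums_zero rows] nonneg by blast
  with \<open>g sums s\<close> have g: "(g has_sum s) UNIV"
    by (rule sums_nonneg_imp_has_sum)
  have row: "((\<lambda>n. F k n) has_sum g k) UNIV" for k
    using rows nonneg by (rule sums_nonneg_imp_has_sum)
  have "(\<lambda>(k, n). F k n) summable_on UNIV \<times> UNIV"
    using row g nonneg by (intro summable_on_SigmaI[where g = g]) (auto simp: has_sum_imp_summable)
  then have "((\<lambda>(k, n). F k n) has_sum s) (UNIV \<times> UNIV)"
    using row g by (intro has_sum_SigmaI[where g = g]) auto
  then have swapped: "((\<lambda>(n, k). F k n) has_sum s) (UNIV \<times> UNIV)"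
    by (subst (asm) has_sum_swap) (simp add: case_prod_unfold)
  have "((\<lambda>k. F k n) has_sum h n) UNIV" for n
    using cols nonneg by (rule sums_nonneg_imp_has_sum)
  then have "(h has_sum s) UNIV"
    by (intro has_sum_SigmaD[OF swapped]) simp
  then show ?thesis
    by (rule has_sum_imp_sums)
qed

lemma powser_tendsto_at_left_imp_sums:
  fixes a :: "nat \<Rightarrow> real"
  assumes nonneg: "\<And>n. a n \<ge> 0"
    and powser: "\<And>y. 0 < y \<Longrightarrow> y < 1 \<Longrightarrow> (\<lambda>n. a n * y ^ n) sums f y"
    and lim: "(f \<longlongrightarrow> L) (at_left 1)"
  shows "a sums L"
proof -
  have near_1: "\<forall>\<^sub>F y in at_left 1. y \<in> {0<..<(1::real)}"
    by (rule eventually_at_left_real) simp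
  have partial_le: "sum a {..<N} \<le> L" for N
  proof (rule tendsto_le[OF _ lim])
    show "((\<lambda>y. \<Sum>n<N. a n * y ^ n) \<longlongrightarrow> sum a {..<N}) (at_left 1)"
      by (auto intro!: tendsto_eq_intros)
    show "\<forall>\<^sub>F y in at_left 1. (\<Sum>n<N. a n * y ^ n) \<le> f y"
      using near_1
    proof eventually_elim
      case (elim y)
      then have "(\<lambda>n. a n * y ^ n) sums f y"
        using powser by simp
      moreover have "a n * y ^ n \<ge> 0" for n
        using elim nonneg[of n] by simp
      ultimately show ?case
        using sum_le_suminf[of "\<lambda>n. a n * y ^ n" "{..<N}"] by (simp add: sums_iff)
    qed
  qed simp
  then have "summable a"
    using nonneg by (intro bounded_imp_summable[of _ L])
      (simp_all flip: lessThan_Suc_atMost del: sum.lessThan_Suc)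
  have "suminf a \<le> L"
    using \<open>summable a\<close> partial_le by (rule suminf_le_const)
  moreover have "L \<le> suminf a"
  proof (rule tendsto_le[OF _ tendsto_const lim])
    show "\<forall>\<^sub>F y in at_left 1. f y \<le> suminf a"
      using near_1
    proof eventually_elim
      case (elim y)
      then have "a n * y ^ n \<le> a n" for n
        using nonneg[of n] by (simp add: mult_left_le power_le_one)
      moreover have "(\<lambda>n. a n * y ^ n) sums f y"
        using powser elim by simp
      ultimately show ?case
        using suminf_le[of "\<lambda>n. a n * y ^ n" a] \<open>summable a\<close> by (simp add: sums_iff)
    qed
  qed simp
  ultimately show ?thesis
    using \<open>summable a\<close> by (simp add: sums_iff)
qed

lemma telescope_sums_shift:
  fixes f :: "nat \<Rightarrow> 'a::real_normed_vector"
  assumes "f \<longlonglongrightarrow> 0"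
  shows "(\<lambda>k. f k - f (k + m)) sums (\<Sum>i<m. f i)"
proof (induction m)
  case (Suc m)
  have "(\<lambda>k. f (k + m)) \<longlonglongrightarrow> 0"
    using assms by (rule LIMSEQ_ignore_initial_segment)
  from telescope_sums'[OF this] have "(\<lambda>k. f (k + m) - f (Suc (k + m))) sums (f m - 0)"
    by simp
  with Suc have "(\<lambda>k. (f k - f (k + m)) + (f (k + m) - f (Suc (k + m))))
      sums ((\<Sum>i<m. f i) + f m)"
    by (intro sums_add) auto
  then show ?case
    by simp
qed simp

lemma summable_powser_bounded:
  fixes a :: "nat \<Rightarrow> real"
  assumes "\<And>n. \<bar>a n\<bar> \<le> 1" and "\<bar>y\<bar> < 1"
  shows "summable (\<lambda>n. a n * y ^ n)"
  by (rule summable_comparison_test'[OF summable_geometric[of "\<bar>y\<bar>"]])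
     (use assms in \<open>auto simp: abs_mult power_abs intro!: mult_left_le_one_le\<close>)

lemma powser_shift_sums:
  fixes a :: "nat \<Rightarrow> real"
  assumes "(\<lambda>n. a (Suc n) * y ^ n) sums s" and "a 0 = 0"
  shows "(\<lambda>n. a n * y ^ n) sums (y * s)"
proof -
  have "(\<lambda>n. a (Suc n) * y ^ Suc n) sums (y * s)"
    using sums_mult[OF assms(1), of y] by (simp add: mult_ac)
  then show ?thesis
    using assms(2) by (subst (asm) sums_Suc_iff) simp
qed

lemma powser_has_real_derivative:
  fixes a :: "nat \<Rightarrow> real"
  assumes "\<And>y. \<bar>y\<bar> < 1 \<Longrightarrow> summable (\<lambda>n. a n * y ^ n)" and "\<bar>x\<bar> < 1"
  shows "((\<lambda>y. \<Sum>n. a n * y ^ n) has_real_derivative (\<Sum>n. diffs a n * x ^ n)) (at x)"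
  using assms by (intro termdiffs_strong'[of 1]) auto

lemma summable_powser_diffs:
  fixes a :: "nat \<Rightarrow> real"
  assumes "\<And>y. \<bar>y\<bar> < 1 \<Longrightarrow> summable (\<lambda>n. a n * y ^ n)" and "\<bar>x\<bar> < 1"
  shows "summable (\<lambda>n. diffs a n * x ^ n)"
  using assms by (intro termdiff_converges[of x 1]) auto

section \<open>Normalised central binomial coefficients\<close>

lemma central_binomial_Suc:
  "real ((2 * Suc n) choose Suc n) * (real n + 1) = 2 * (2 * real n + 1) * real ((2 * n) choose n)"
proof -
  have Suc: "real ((2 * Suc n) choose Suc n) = fact (Suc (Suc (2 * n))) / (fact (Suc n) * fact (Suc n))"
    by (subst binomial_fact) simp_all
  have n: "real ((2 * n) choose n) = fact (2 * n) / (fact n * fact n)"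
    by (subst binomial_fact) simp_all
  have "fact n \<noteq> (0::real)"
    by simp
  then show ?thesis
    unfolding Suc n fact_Suc by (simp add: divide_simps) (simp add: algebra_simps)
qed

definition cbinom :: "nat \<Rightarrow> real" where
  "cbinom n = real ((2 * n) choose n) / 4 ^ n"

lemma cbinom_0 [simp]: "cbinom 0 = 1"
  by (simp add: cbinom_def)

lemma cbinom_pos: "cbinom n > 0"
  by (simp add: cbinom_def)

lemma cbinom_Suc: "cbinom (Suc n) = cbinom n * (2 * real n + 1) / (2 * real n + 2)"
proof -
  have "cbinom (Suc n) * (2 * real n + 2) = 2 * (real ((2 * Suc n) choose Suc n) * (real n + 1)) / 4 ^ Suc n"
    unfolding cbinom_def by (simp add: field_simps del: binomial_Suc_Suc)
  also have "\<dots> = cbinom n * (2 * real n + 1)"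
    unfolding central_binomial_Suc cbinom_def by (simp add: field_simps)
  finally show ?thesis
    by (simp add: field_simps)
qed

lemma cbinom_diff_Suc: "cbinom n - cbinom (Suc n) = cbinom n / (2 * real n + 2)"
  by (simp add: cbinom_Suc field_simps)

lemma cbinom_le_1: "cbinom n \<le> 1"
proof (induction n)
  case (Suc n)
  have "cbinom n / (2 * real n + 2) \<ge> 0"
    using cbinom_pos[of n] by simp
  with cbinom_diff_Suc[of n] Suc show ?case
    by linarith
qed simp

lemma cbinom_lower_bound: "n > 0 \<Longrightarrow> 1 / (2 * real n) \<le> cbinom n"
  using central_binomial_lower_bound[of n] by (simp add: cbinom_def field_simps)

lemma cbinom_le_inverse_sqrt: "cbinom n \<le> 1 / sqrt (2 * real n + 1)"
proof -
  have "cbinom n ^ 2 * (2 * real n + 1) \<le> 1"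
  proof (induction n)
    case (Suc n)
    have "cbinom (Suc n) * (2 * real n + 2) = cbinom n * (2 * real n + 1)"
      by (simp add: cbinom_Suc)
    then have "cbinom (Suc n) ^ 2 * (2 * real (Suc n) + 1) * (2 * real n + 2) ^ 2
        = (cbinom n * (2 * real n + 1)) ^ 2 * (2 * real n + 3)"
      by (simp add: power_mult_distrib [symmetric] algebra_simps)
    also have "\<dots> = cbinom n ^ 2 * (2 * real n + 1) * ((2 * real n + 1) * (2 * real n + 3))"
      by (simp add: power2_eq_square)
    also have "\<dots> \<le> cbinom n ^ 2 * (2 * real n + 1) * (2 * real n + 2) ^ 2"
      by (intro mult_left_mono) (simp_all add: power2_eq_square algebra_simps)
    finally have "cbinom (Suc n) ^ 2 * (2 * real (Suc n) + 1) \<le> cbinom n ^ 2 * (2 * real n + 1)"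
      by (simp add: mult_le_cancel_right_pos)
    with Suc show ?case
      by linarith
  qed simp
  then have "cbinom n ^ 2 \<le> (1 / sqrt (2 * real n + 1)) ^ 2"
    by (simp add: power_divide field_simps)
  then show ?thesis
    by (rule power2_le_imp_le) simp
qed

lemma cbinom_tendsto_0: "cbinom \<longlonglongrightarrow> 0"
proof (rule tendsto_sandwich)
  show "\<forall>\<^sub>F n in sequentially. 0 \<le> cbinom n"
    using cbinom_pos by (simp add: less_imp_le)
  show "\<forall>\<^sub>F n in sequentially. cbinom n \<le> 1 / sqrt (2 * real n + 1)"
    using cbinom_le_inverse_sqrt by simp
  show "(\<lambda>n. 1 / sqrt (2 * real n + 1)) \<longlonglongrightarrow> 0"
    by real_asymp
qed simp

lemma cbinom_eq_gbinomial: "cbinom n = (-1) ^ n * ((-1/2 :: real) gchoose n)"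
proof (induction n)
  case (Suc n)
  have "of_nat (Suc n) * ((-1/2 :: real) gchoose Suc n) = (-1/2 - of_nat n) * ((-1/2) gchoose n)"
    using gbinomial_absorption[of n "-1/2 :: real"] gbinomial_absorb_comp[of "-1/2 :: real" n] by simp
  then have "((-1/2 :: real) gchoose Suc n) = - ((2 * real n + 1) / (2 * real n + 2)) * ((-1/2) gchoose n)"
    by (simp add: field_simps)
  then show ?case
    using Suc by (simp add: cbinom_Suc)
qed simp

lemma cbinom_powser_sums:
  assumes "\<bar>y\<bar> < 1"
  shows "(\<lambda>n. cbinom n * y ^ n) sums (1 / sqrt (1 - y))"
proof -
  have "cbinom n * y ^ n = ((-1/2) gchoose n) * (-y) ^ n" for n
    unfolding cbinom_eq_gbinomial power_minus[of y] by (simp only: mult_ac)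
  moreover have "(1 + - y) powr (-1/2) = 1 / sqrt (1 - y)"
    using assms by (simp add: powr_minus_divide powr_half_sqrt)
  moreover have "(\<lambda>n. ((-1/2) gchoose n) * (-y) ^ n) sums (1 + - y) powr (-1/2)"
    using assms by (intro gen_binomial_real) simp
  ultimately show ?thesis
    by (simp only:)
qed

lemma cbinom_div_add_sums:
  assumes "k > 0"
  shows "(\<lambda>n. cbinom n / (real n + real k)) sums (1 / (real k * cbinom k))"
proof -
  have telescope: "(\<lambda>n. cbinom n - cbinom (Suc n)) sums 1"
    using telescope_sums'[OF cbinom_tendsto_0] by simp
  from assms show ?thesis
  proof (induction k rule: nat_induct_non_zero)
    case 1
    have "2 * (cbinom n - cbinom (Suc n)) = cbinom n / (real n + real 1)" for n
      by (simp add: cbinom_diff_Suc field_simps)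
    with sums_mult[OF telescope, of 2] show ?case
      by (simp add: cbinom_Suc)
  next
    case (Suc k)
    (* the recurrence of cbinom expresses the new terms through the shifted old series and the
       telescoping differences c_n - c_(n+1) *)
    have "cbinom n / (real n + real (Suc k))
        = (2 * real k * (cbinom (Suc n) / (real (Suc n) + real k))
           + 2 * (cbinom n - cbinom (Suc n))) / (2 * real k + 1)" for n
      using of_nat_0_le_iff[of n] of_nat_0_le_iff[of k]
      by (simp add: cbinom_Suc divide_simps) (simp add: algebra_simps)
    moreover have "(\<lambda>n. cbinom (Suc n) / (real (Suc n) + real k))
        sums (1 / (real k * cbinom k) - 1 / real k)"
      using Suc.IH by (subst sums_Suc_iff) simp
    ultimately have "(\<lambda>n. cbinom n / (real n + real (Suc k))) sums
        ((2 * real k * (1 / (real k * cbinom k) - 1 / real k) + 2 * 1) / (2 * real k + 1))"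
      using telescope by (simp only:) (intro sums_divide sums_add sums_mult)
    moreover have "(2 * real k * (1 / (real k * cbinom k) - 1 / real k) + 2 * 1) / (2 * real k + 1)
        = 1 / (real (Suc k) * cbinom (Suc k))"
      using Suc.hyps cbinom_pos[of k] by (simp add: cbinom_Suc divide_simps; simp add: algebra_simps)
    ultimately show ?case
      by simp
  qed
qed

section \<open>The series with weights 1/(n+1)\<close>

(* The term cbinom n / real n vanishes at n = 0 since x / 0 = 0. *)
lemma summable_cbinom_div_powser: "\<bar>y\<bar> < 1 \<Longrightarrow> summable (\<lambda>n. cbinom n / real n * y ^ n)"
  by (rule summable_powser_bounded)
     (use cbinom_pos in \<open>auto simp: divide_le_eq less_imp_le intro: order_trans[OF cbinom_le_1]\<close>)

lemma cbinom_Suc_powser: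
  assumes "\<bar>y\<bar> < 1"
  shows "(\<Sum>n. cbinom (Suc n) * y ^ n) = 1 / (sqrt (1 - y) * (1 + sqrt (1 - y)))"
proof (cases "y = 0")
  case True
  then show ?thesis
    using powser_zero[of "\<lambda>n. cbinom (Suc n)"] by (simp add: cbinom_Suc)
next
  case False
  define s where "s = sqrt (1 - y)"
  have s: "s > 0" "1 - s \<noteq> 0" "y = (1 - s) * (1 + s)"
    using assms False by (auto simp: s_def algebra_simps)
  have "(\<lambda>n. cbinom (Suc n) * y ^ Suc n) sums (1 / s - 1)"
    using cbinom_powser_sums[OF assms] by (subst sums_Suc_iff) (simp add: s_def)
  then have "(\<lambda>n. y * (cbinom (Suc n) * y ^ n) / y) sums ((1 / s - 1) / y)"
    by (intro sums_divide) (simp add: mult_ac)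
  moreover have "(1 / s - 1) / y = 1 / (s * (1 + s))"
  proof -
    have "1 / s - 1 = (1 - s) / s"
      using s(1) by (simp add: diff_divide_distrib)
    then show ?thesis
      unfolding s(3) using s(2) by (simp add: mult.left_commute)
  qed
  ultimately show ?thesis
    using False by (simp add: sums_iff s_def)
qed

lemma cbinom_div_powser:
  assumes "\<bar>y\<bar> < 1"
  shows "(\<Sum>n. cbinom n / real n * y ^ n) = 2 * ln 2 - 2 * ln (1 + sqrt (1 - y))"
proof -
  define f where "f y = (\<Sum>n. cbinom n / real n * y ^ n) - (2 * ln 2 - 2 * ln (1 + sqrt (1 - y)))" for y
  have "(f has_real_derivative 0) (at x)" if "x \<in> {-1<..<1}" for x
  proof -
    have x: "\<bar>x\<bar> < 1" and "sqrt (1 - x) > 0"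
      using that by auto
    have "diffs (\<lambda>n. cbinom n / real n) = (\<lambda>n. cbinom (Suc n))"
      by (simp add: diffs_def)
    then have "((\<lambda>y. \<Sum>n. cbinom n / real n * y ^ n) has_real_derivative
                 1 / (sqrt (1 - x) * (1 + sqrt (1 - x)))) (at x)"
      using powser_has_real_derivative[OF summable_cbinom_div_powser x] cbinom_Suc_powser[OF x] by simp
    moreover have "((\<lambda>y. 2 * ln 2 - 2 * ln (1 + sqrt (1 - y))) has_real_derivative
                      1 / (sqrt (1 - x) * (1 + sqrt (1 - x)))) (at x)"
      using \<open>sqrt (1 - x) > 0\<close> by (auto intro!: derivative_eq_intros simp: divide_simps add_pos_pos)
    ultimately show ?thesis
      unfolding f_def using DERIV_diff by fastforce
  qed
  then have "f y = f 0"
    using assms by (intro DERIV_isconst3[of "-1" 1]) auto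
  then show ?thesis
    using powser_zero[of "\<lambda>n. cbinom n / real n"] by (simp add: f_def)
qed

lemma cbinom_div_sums: "(\<lambda>n. cbinom n / real n) sums (2 * ln 2)"
proof (rule powser_tendsto_at_left_imp_sums)
  show "0 \<le> cbinom n / real n" for n
    using cbinom_pos[of n] by simp
  show "(\<lambda>n. cbinom n / real n * y ^ n) sums (2 * ln 2 - 2 * ln (1 + sqrt (1 - y)))"
    if "0 < y" "y < 1" for y
    using that summable_cbinom_div_powser[of y] cbinom_div_powser[of y] by (simp add: sums_iff)
  show "((\<lambda>y. 2 * ln 2 - 2 * ln (1 + sqrt (1 - y))) \<longlongrightarrow> 2 * ln 2) (at_left (1::real))"
    by (rule tendsto_eq_intros refl | simp)+
qed

lemma harm_mult_cbinom_tendsto_0: "(\<lambda>n. harm n * cbinom n) \<longlonglongrightarrow> 0"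
proof (rule tendsto_sandwich)
  show "\<forall>\<^sub>F n in sequentially. 0 \<le> harm n * cbinom n"
    using cbinom_pos by (simp add: less_imp_le harm_nonneg)
  show "\<forall>\<^sub>F n in sequentially. harm n * cbinom n \<le> (ln (real n) + 1) / sqrt (2 * real n + 1)"
    using eventually_gt_at_top[of 0]
  proof eventually_elim
    case (elim n)
    have "harm n \<le> ln (real n) + 1"
      using euler_mascheroni_sequence_decreasing[of 1 n] elim by (simp add: harm_def)
    then have "harm n * cbinom n \<le> (ln (real n) + 1) * (1 / sqrt (2 * real n + 1))"
      using cbinom_le_inverse_sqrt[of n] cbinom_pos[of n] harm_nonneg[of n] elim
      by (intro mult_mono) auto
    then show ?case
      by simp
  qed
  show "(\<lambda>n. (ln (real n) + 1) / sqrt (2 * real n + 1)) \<longlonglongrightarrow> 0"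
    by real_asymp
qed simp

(* As c_n / (n+1) = 2 (c_n - c_(n+1)), summation by parts moves the difference onto H_n. *)
lemma cbinom_harm_div_Suc_sums: "(\<lambda>n. cbinom n * harm n / (real n + 1)) sums (4 * ln 2)"
proof -
  have "(\<lambda>n. cbinom (Suc n) / real (Suc n)) sums (2 * ln 2)"
    using cbinom_div_sums by (subst sums_Suc_iff) simp
  moreover have "(\<lambda>n. harm (Suc n) * cbinom (Suc n) - harm n * cbinom n) sums 0"
    using telescope_sums[OF harm_mult_cbinom_tendsto_0] by (simp add: harm_def)
  ultimately have "(\<lambda>n. 2 * (cbinom (Suc n) / real (Suc n)
                     - (harm (Suc n) * cbinom (Suc n) - harm n * cbinom n))) sums (2 * (2 * ln 2 - 0))"
    by (intro sums_mult sums_diff)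
  moreover have "2 * (cbinom (Suc n) / real (Suc n) - (harm (Suc n) * cbinom (Suc n) - harm n * cbinom n))
      = cbinom n * harm n / (real n + 1)" for n
  proof -
    have "2 * (cbinom (Suc n) / real (Suc n) - (harm (Suc n) * cbinom (Suc n) - harm n * cbinom n))
        = 2 * harm n * (cbinom n - cbinom (Suc n))"
      by (simp add: harm_Suc divide_inverse algebra_simps)
    also have "\<dots> = cbinom n * harm n / (real n + 1)"
      by (simp add: cbinom_diff_Suc field_simps)
    finally show ?thesis .
  qed
  ultimately show ?thesis
    by simp
qed

section \<open>The power series of arcsin squared\<close>

(* arcsin (sqrt y)^2 = sum_n y^n / (2 n^2 c_n); for n = 0 the division by zero yields the correct
   constant term 0 *)
definition arcsin_sq_coeff :: "nat \<Rightarrow> real" where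
  "arcsin_sq_coeff n = 1 / (2 * real n ^ 2 * cbinom n)"

lemma arcsin_sq_coeff_0 [simp]: "arcsin_sq_coeff 0 = 0"
  by (simp add: arcsin_sq_coeff_def)

lemma arcsin_sq_coeff_nonneg: "arcsin_sq_coeff n \<ge> 0"
  using cbinom_pos[of n] by (simp add: arcsin_sq_coeff_def)

lemma arcsin_sq_coeff_le_1: "arcsin_sq_coeff n \<le> 1"
proof (cases "n = 0")
  case False
  then have "1 \<le> 2 * real n * cbinom n"
    using cbinom_lower_bound[of n] by (simp add: field_simps)
  also have "\<dots> \<le> 2 * real n * cbinom n * real n"
    using mult_left_mono[of 1 "real n" "2 * real n * cbinom n"] False cbinom_pos[of n] by simp
  finally show ?thesis
    by (simp add: arcsin_sq_coeff_def power2_eq_square mult_ac)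
qed simp

lemma arcsin_sq_coeff_Suc:
  "n > 0 \<Longrightarrow>
    (real n + 1) * (4 * real n + 2) * arcsin_sq_coeff (Suc n) = 4 * real n ^ 2 * arcsin_sq_coeff n"
  using cbinom_pos[of n]
  by (simp add: arcsin_sq_coeff_def cbinom_Suc divide_simps; simp add: algebra_simps power2_eq_square)

lemma summable_arcsin_sq_powser: "\<bar>y\<bar> < 1 \<Longrightarrow> summable (\<lambda>n. arcsin_sq_coeff n * y ^ n)"
  using arcsin_sq_coeff_nonneg arcsin_sq_coeff_le_1 by (intro summable_powser_bounded) auto

lemma arcsin_sq_powser_ode:
  assumes y: "\<bar>y\<bar> < 1"
  defines "D1 \<equiv> \<Sum>n. diffs arcsin_sq_coeff n * y ^ n"
    and "D2 \<equiv> \<Sum>n. diffs (diffs arcsin_sq_coeff) n * y ^ n"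
  shows "4 * y * (1 - y) * D2 + 2 * (1 - 2 * y) * D1 = 2"
proof -
  let ?a = arcsin_sq_coeff
  define g1 where "g1 n = real n * ?a n" for n
  define g2 where "g2 n = real n * (real (Suc n) * ?a (Suc n))" for n
  define g3 where "g3 n = (real n - 1) * g1 n" for n
  have D1: "(\<lambda>n. diffs ?a n * y ^ n) sums D1"
    unfolding D1_def using summable_powser_diffs[OF summable_arcsin_sq_powser y] by (rule summable_sums)
  have D2: "(\<lambda>n. diffs (diffs ?a) n * y ^ n) sums D2"
    unfolding D2_def using summable_powser_diffs[OF summable_powser_diffs[OF summable_arcsin_sq_powser] y]
    by (rule summable_sums)
  have yD1: "(\<lambda>n. g1 n * y ^ n) sums (y * D1)"
    by (rule powser_shift_sums) (use D1 in \<open>simp_all add: g1_def diffs_def\<close>)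
  have yD2: "(\<lambda>n. g2 n * y ^ n) sums (y * D2)"
    by (rule powser_shift_sums) (use D2 in \<open>simp_all add: g2_def diffs_def\<close>)
  have yyD2: "(\<lambda>n. g3 n * y ^ n) sums (y * (y * D2))"
    by (rule powser_shift_sums) (use yD2 in \<open>simp_all add: g1_def g2_def g3_def\<close>)
  have coeff: "4 * g2 n - 4 * g3 n + 2 * diffs ?a n - 4 * g1 n = (if n = 0 then 2 else 0)" for n
  proof (cases "n = 0")
    case True
    then show ?thesis
      by (simp add: g1_def g2_def g3_def diffs_def arcsin_sq_coeff_def cbinom_Suc)
  next
    case False
    have "4 * g2 n - 4 * g3 n + 2 * diffs ?a n - 4 * g1 n
        = (real n + 1) * (4 * real n + 2) * ?a (Suc n) - 4 * real n ^ 2 * ?a n"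
      unfolding g1_def g2_def g3_def diffs_def by (simp add: power2_eq_square ring_distribs)
    then show ?thesis
      using False arcsin_sq_coeff_Suc[of n] by simp
  qed
  have "(\<lambda>n. (4 * g2 n - 4 * g3 n + 2 * diffs ?a n - 4 * g1 n) * y ^ n)
        sums (4 * (y * D2) - 4 * (y * (y * D2)) + 2 * D1 - 4 * (y * D1))"
    unfolding left_diff_distrib distrib_right mult.assoc
    by (intro sums_diff sums_add sums_mult yD1 yD2 yyD2 D1)
  moreover have "(\<lambda>n. (4 * g2 n - 4 * g3 n + 2 * diffs ?a n - 4 * g1 n) * y ^ n) sums 2"
  proof -
    have "(\<lambda>n. (if n = 0 then 2 else 0) * y ^ n) = (\<lambda>n. if n = 0 then 2 else (0::real))"
      by auto
    then show ?thesis
      unfolding coeff using sums_single[of 0 "\<lambda>_. 2::real"] by simp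
  qed
  ultimately have "4 * (y * D2) - 4 * (y * (y * D2)) + 2 * D1 - 4 * (y * D1) = 2"
    by (rule sums_unique2)
  then show ?thesis
    by (simp add: algebra_simps)
qed

lemma sin_sq_less_1: "\<bar>t\<bar> < pi / 2 \<Longrightarrow> \<bar>sin t ^ 2\<bar> < 1"
proof -
  assume "\<bar>t\<bar> < pi / 2"
  then have "cos t > 0"
    by (intro cos_gt_zero_pi) auto
  then have "cos t ^ 2 > 0"
    by simp
  moreover have "sin t ^ 2 + cos t ^ 2 = 1"
    by (rule sin_cos_squared_add)
  ultimately show ?thesis
    using zero_le_power2[of "sin t"] by linarith
qed

lemma has_real_derivative_sin_sq: "((\<lambda>t. sin t ^ 2) has_real_derivative sin (2 * t)) (at t)"
  by (auto intro!: derivative_eq_intros simp: sin_double)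

(* With y = sin^2 t the differential equation states that f'(sin^2 t) sin 2t has derivative 2. *)
lemma arcsin_sq_powser_diffs_sin_sq:
  assumes "\<bar>t\<bar> < pi / 2"
  shows "(\<Sum>n. diffs arcsin_sq_coeff n * (sin t ^ 2) ^ n) * sin (2 * t) = 2 * t"
proof -
  define D1 where "D1 y = (\<Sum>n. diffs arcsin_sq_coeff n * y ^ n)" for y
  define D2 where "D2 y = (\<Sum>n. diffs (diffs arcsin_sq_coeff) n * y ^ n)" for y
  define G where "G t = D1 (sin t ^ 2) * sin (2 * t) - 2 * t" for t
  have "(G has_real_derivative 0) (at x)" if "x \<in> {-(pi/2)<..<pi/2}" for x
  proof -
    have y: "\<bar>sin x ^ 2\<bar> < 1"
      using that by (intro sin_sq_less_1) auto
    have "(D1 has_real_derivative D2 (sin x ^ 2)) (at (sin x ^ 2))"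
      unfolding D1_def D2_def
      by (intro powser_has_real_derivative summable_powser_diffs summable_arcsin_sq_powser y)
    from DERIV_chain2[OF this has_real_derivative_sin_sq]
    have "(G has_real_derivative
            D2 (sin x ^ 2) * (sin (2 * x) * sin (2 * x)) + 2 * D1 (sin x ^ 2) * cos (2 * x) - 2) (at x)"
      unfolding G_def by (auto intro!: derivative_eq_intros simp: algebra_simps)
    moreover have "D2 (sin x ^ 2) * (sin (2 * x) * sin (2 * x)) + 2 * D1 (sin x ^ 2) * cos (2 * x) - 2 = 0"
    proof -
      have "sin (2 * x) * sin (2 * x) = 4 * sin x ^ 2 * (1 - sin x ^ 2)"
        by (simp add: sin_double power2_eq_square cos_squared_eq [unfolded power2_eq_square])
      moreover have "cos (2 * x) = 1 - 2 * sin x ^ 2"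
        by (rule cos_double_sin)
      ultimately have "D2 (sin x ^ 2) * (sin (2 * x) * sin (2 * x)) + 2 * D1 (sin x ^ 2) * cos (2 * x) - 2
          = 4 * sin x ^ 2 * (1 - sin x ^ 2) * D2 (sin x ^ 2) + 2 * (1 - 2 * sin x ^ 2) * D1 (sin x ^ 2) - 2"
        by (simp only:) (simp add: algebra_simps)
      then show ?thesis
        using arcsin_sq_powser_ode[OF y] unfolding D1_def D2_def by simp
    qed
    ultimately show ?thesis
      by simp
  qed
  then have "G t = G 0"
    using assms by (intro DERIV_isconst3[of "-(pi/2)" "pi/2"]) auto
  then show ?thesis
    by (simp add: G_def D1_def)
qed

lemma arcsin_sq_powser_sin_sq:
  assumes "\<bar>t\<bar> < pi / 2"
  shows "(\<Sum>n. arcsin_sq_coeff n * (sin t ^ 2) ^ n) = t ^ 2"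
proof -
  define G where "G t = (\<Sum>n. arcsin_sq_coeff n * (sin t ^ 2) ^ n) - t ^ 2" for t
  have "(G has_real_derivative 0) (at x)" if "x \<in> {-(pi/2)<..<pi/2}" for x
  proof -
    have "\<bar>x\<bar> < pi / 2"
      using that by auto
    from DERIV_chain2[OF powser_has_real_derivative[OF summable_arcsin_sq_powser sin_sq_less_1[OF this]]
        has_real_derivative_sin_sq]
    have "(G has_real_derivative
            (\<Sum>n. diffs arcsin_sq_coeff n * (sin x ^ 2) ^ n) * sin (2 * x) - 2 * x) (at x)"
      unfolding G_def by (auto intro!: derivative_eq_intros)
    then show ?thesis
      using arcsin_sq_powser_diffs_sin_sq[OF \<open>\<bar>x\<bar> < pi / 2\<close>] by simp
  qed
  then have "G t = G 0"
    using assms by (intro DERIV_isconst3[of "-(pi/2)" "pi/2"]) auto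
  then show ?thesis
    using powser_zero[of arcsin_sq_coeff] by (simp add: G_def)
qed

lemma arcsin_sq_powser_sums:
  assumes "0 \<le> y" "y < 1"
  shows "(\<lambda>n. arcsin_sq_coeff n * y ^ n) sums arcsin (sqrt y) ^ 2"
proof -
  define t where "t = arcsin (sqrt y)"
  have sqrt_y: "0 \<le> sqrt y" "sqrt y < 1"
    using assms by auto
  then have "sin t = sqrt y"
    unfolding t_def by (intro sin_arcsin) linarith+
  moreover have "\<bar>t\<bar> < pi / 2"
    unfolding t_def using arcsin_lt_bounded[of "sqrt y"] sqrt_y by linarith
  ultimately have "(\<Sum>n. arcsin_sq_coeff n * y ^ n) = t ^ 2"
    using arcsin_sq_powser_sin_sq[of t] assms by simp
  moreover have "summable (\<lambda>n. arcsin_sq_coeff n * y ^ n)"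
    using assms by (intro summable_arcsin_sq_powser) simp
  ultimately show ?thesis
    by (simp add: sums_iff t_def)
qed

lemma arcsin_sq_coeff_sums: "arcsin_sq_coeff sums (pi ^ 2 / 4)"
proof (rule powser_tendsto_at_left_imp_sums)
  show "0 \<le> arcsin_sq_coeff n" for n
    by (rule arcsin_sq_coeff_nonneg)
  show "(\<lambda>n. arcsin_sq_coeff n * y ^ n) sums arcsin (sqrt y) ^ 2" if "0 < y" "y < 1" for y
    using that by (intro arcsin_sq_powser_sums) auto
  have "continuous_on {0..1} (\<lambda>y. arcsin (sqrt y) ^ 2)"
    by (intro continuous_intros) (auto intro: order_trans[OF _ real_sqrt_ge_zero])
  then have "((\<lambda>y. arcsin (sqrt y) ^ 2) \<longlongrightarrow> arcsin (sqrt 1) ^ 2) (at 1 within {0..1})"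
    unfolding continuous_on_def by (metis atLeastAtMost_iff order_refl zero_le_one)
  then show "((\<lambda>y. arcsin (sqrt y) ^ 2) \<longlongrightarrow> pi ^ 2 / 4) (at_left 1)"
    by (simp add: at_within_Icc_at_left power_divide)
qed

lemma cbinom_inverse_squares_sums: "(\<lambda>n. 1 / ((real n + 1) ^ 2 * cbinom (Suc n))) sums (pi ^ 2 / 2)"
proof -
  have "(\<lambda>n. arcsin_sq_coeff (Suc n)) sums (pi ^ 2 / 4)"
    using arcsin_sq_coeff_sums by (subst sums_Suc_iff) simp
  from sums_mult[OF this, of 2] show ?thesis
    by (simp add: arcsin_sq_coeff_def add_ac)
qed

section \<open>The series with weights 1/n\<close>

lemma harm_div_sums:
  assumes "n > 0"
  shows "(\<lambda>k. 1 / ((real k + 1) * (real k + real n + 1))) sums (harm n / real n)"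
proof -
  have "(\<lambda>k. 1 / (real k + 1)) \<longlonglongrightarrow> 0"
    by real_asymp
  from sums_divide[OF telescope_sums_shift[OF this, of n], of "real n"]
  have "(\<lambda>k. (1 / (real k + 1) - 1 / (real (k + n) + 1)) / real n) sums (harm n / real n)"
    by (simp add: harm_altdef inverse_eq_divide add_ac)
  moreover have "(1 / (real k + 1) - 1 / (real (k + n) + 1)) / real n
      = 1 / ((real k + 1) * (real k + real n + 1))" for k
    using assms by (simp add: divide_simps; simp add: algebra_simps)
  ultimately show ?thesis
    by simp
qed

lemma cbinom_harm_div_sums: "(\<lambda>n. cbinom n * harm n / real n) sums (pi ^ 2 / 3)"
proof -
  define F where "F k n = cbinom (Suc n) / ((real k + 1) * (real k + real n + 2))" for k n
  define g where "g k = 1 / ((real k + 1) ^ 2 * cbinom (Suc k)) - 1 / (real k + 1) ^ 2" for k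
  have "(\<lambda>n. cbinom (Suc n) * harm (Suc n) / real (Suc n)) sums (pi ^ 2 / 3)"
  proof (rule sums_swap_nonneg)
    show "0 \<le> F k n" for k n
      using cbinom_pos[of "Suc n"] by (simp add: F_def)
    show "(\<lambda>n. F k n) sums g k" for k
    proof -
      have "(\<lambda>n. cbinom (Suc n) / (real (Suc n) + real (Suc k))) sums
              (1 / (real (Suc k) * cbinom (Suc k)) - 1 / real (Suc k))"
        using cbinom_div_add_sums[of "Suc k"] by (subst sums_Suc_iff) simp
      from sums_divide[OF this, of "real k + 1"] show ?thesis
        by (simp add: F_def g_def power2_eq_square diff_divide_distrib add_ac mult_ac)
    qed
    show "(\<lambda>k. F k n) sums (cbinom (Suc n) * harm (Suc n) / real (Suc n))" for n
      using sums_mult[OF harm_div_sums[of "Suc n"], of "cbinom (Suc n)"]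
      by (simp add: F_def add_ac)
      have "(\<lambda>k. 1 / ((real k + 1) ^ 2 * cbinom (Suc k)) - 1 / (real k + 1) ^ 2)
        sums (pi ^ 2 / 2 - pi ^ 2 / 6)"
      using cbinom_inverse_squares_sums inverse_squares_sums by (intro sums_diff) (simp_all add: add_ac)
    then show "g sums (pi ^ 2 / 3)"
      by (simp add: g_def [abs_def])
  qed
  then show ?thesis
    by (subst (asm) sums_Suc_iff) simp
qed

lemma cbinom_harm_sums:
  "(\<lambda>n. cbinom n * harm n / (real n * (real n + 1))) sums (pi ^ 2 / 3 - 4 * ln 2)"
proof -
  have "cbinom n * harm n / real n - cbinom n * harm n / (real n + 1)
      = cbinom n * harm n / (real n * (real n + 1))" for n
    by (cases "n = 0") (simp_all add: harm_def divide_simps algebra_simps)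
  with sums_diff[OF cbinom_harm_div_sums cbinom_harm_div_Suc_sums] show ?thesis
    by simp
qed

theorem mainTheorem2:
  shows "(\<lambda>n::nat. harm (n+1) * real ((2*(n+1)) choose (n+1))
            / (real (n+1) * real (n+2) * 2 ^ (2*(n+1))))
         sums (pi^2 / 3 - 4 * ln 2)"
proof -
  have "(\<lambda>n. cbinom (n+1) * harm (n+1) / (real (n+1) * (real (n+1) + 1)))
      sums (pi ^ 2 / 3 - 4 * ln 2)"
    using cbinom_harm_sums by (subst sums_Suc_iff [unfolded Suc_eq_plus1]) simp
  moreover have "cbinom (n+1) * harm (n+1) / (real (n+1) * (real (n+1) + 1))
      = harm (n+1) * real ((2*(n+1)) choose (n+1)) / (real (n+1) * real (n+2) * 2 ^ (2*(n+1)))" for n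
  proof -
    have "(2::real) ^ (2 * (n+1)) = 4 ^ (n+1)"
      by (simp add: power_mult)
    then show ?thesis
      by (simp add: cbinom_def ac_simps del: binomial_Suc_Suc)
  qed
  ultimately show ?thesis
    by simp
qed

end
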